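(* Let $N$ be a positive integer and let $f:\mathbb{N}\to\mathbb{C}$ be periodic with period $N$. Let $a_n(q)$ be the sequence of polynomials in $q$ defined recursively by \[ a_0(q)=0,\qquad a_n(q) = f(n) + \left(1-q^{n-1}\right)a_{n-1}(q) \quad \text{for } n\in\mathbb{N}. \] Then for $q\in\mathbb{C}$ with $|q|<1$ the limit below exists and \[ \lim_{n\rightarrow\infty}\left( \sum_{1\le\ell\le n} f(\ell) - a_n(q) \right) = (q;q)_\infty \sum_{n\ge0}\frac{q^n}{(q;q)_n} \sum_{1\le j\le N} f(j) \left\lceil\frac{n+1-j}{N}\right\rceil . \]
   Context: For $n\in\mathbb{N}_0\cup\{\infty\}$, $(a;q)_n := \prod_{j=0}^{n-1}(1-aq^j)$. *)

theory Defs
  imports "HOL-Analysis.Analysis"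
begin

definition qpoch :: "complex \<Rightarrow> complex \<Rightarrow> nat \<Rightarrow> complex" where
  "qpoch a q n = (\<Prod>j<n. (1 - a * q ^ j))"

definition qpoch_inf :: "complex \<Rightarrow> complex \<Rightarrow> complex" where
  "qpoch_inf a q = (\<Prod>j. (1 - a * q ^ j))"

fun aseq :: "(nat \<Rightarrow> complex) \<Rightarrow> nat \<Rightarrow> complex \<Rightarrow> complex" where
  "aseq f 0 q = 0"
| "aseq f (Suc n) q = f (Suc n) + (1 - q ^ n) * aseq f n q"

end

theory Submission
  imports Defs
begin

text \<open>Write F(n) = f(1) + ... + f(n). The recursion gives
  F(n+1) - a(n+1) = q^n F(n) + (1 - q^n) (F(n) - a(n)), and dividing by (q;q)_n this telescopes to
  F(n+1) - a(n+1) = (q;q)_n \<Sum>m\<le>n. q^m F(m) / (q;q)_m.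
  Periodicity gives F(m) = \<Sum>j=1..N. f(j) \<lceil>(m+1-j)/N\<rceil>, which grows at most linearly in m,
  so the series converges, and the limit follows from (q;q)_n \<longrightarrow> (q;q)_\<infinity>.\<close>

lemma sum_periodic_window:
  fixes f :: "nat \<Rightarrow> 'a::cancel_comm_monoid_add"
  assumes per: "\<forall>n\<ge>1. f (n + N) = f n"
  shows "(\<Sum>l=m+1..m+N. f l) = (\<Sum>l=1..N. f l)"
proof (induction m)
  case (Suc m)
  have "f (m + 1) + (\<Sum>l=Suc m+1..Suc m+N. f l) = (\<Sum>l=m+1..Suc m+N. f l)"
    by (simp add: sum.atLeast_Suc_atMost ac_simps)
  also have "\<dots> = (\<Sum>l=m+1..m+N. f l) + f (m + 1)"
    using per[rule_format, of "m + 1"] by (simp add: add.commute)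
  finally show ?case
    using Suc by (simp add: add.commute)
qed simp

lemma ceiling_period_weight_small:
  fixes m j N :: nat
  assumes "m < N" "1 \<le> j" "j \<le> N"
  shows "\<lceil>(real m + 1 - real j) / real N\<rceil> = (if j \<le> m then 1 else 0)"
  using assms by (subst ceiling_eq_iff) (auto simp: field_simps)

lemma sum_periodic_eq_ceiling_weighted:
  fixes f :: "nat \<Rightarrow> 'a::comm_ring_1"
  assumes N: "N \<ge> 1" and per: "\<forall>n\<ge>1. f (n + N) = f n"
  shows "(\<Sum>l=1..m. f l) = (\<Sum>j=1..N. f j * of_int \<lceil>(real m + 1 - real j) / real N\<rceil>)"
proof (induction m rule: less_induct)
  case (less m)
  show ?case
  proof (cases "m < N")
    case True
    then have "(\<Sum>j=1..N. f j * of_int \<lceil>(real m + 1 - real j) / real N\<rceil>)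
        = (\<Sum>j=1..N. if j \<in> {..m} then f j else 0)"
      by (intro sum.cong) (auto simp: ceiling_period_weight_small)
    also have "\<dots> = (\<Sum>j\<in>{1..N} \<inter> {..m}. f j)"
      by (simp only: sum.inter_restrict finite_atLeastAtMost)
    also have "{1..N} \<inter> {..m} = {1..m}"
      using True by auto
    finally show ?thesis by simp
  next
    case False
    then obtain k where m: "m = k + N"
      by (metis le_add_diff_inverse2 not_less)
    have shift: "\<lceil>(real m + 1 - real j) / real N\<rceil> = \<lceil>(real k + 1 - real j) / real N\<rceil> + 1" for j
    proof -
      have "(real m + 1 - real j) / real N = (real k + 1 - real j) / real N + 1"
        using N by (simp add: m field_simps)
      then show ?thesis by simp
    qed
    have "(\<Sum>l=1..m. f l) = (\<Sum>l=1..k. f l) + (\<Sum>l=k+1..k+N. f l)"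
      unfolding m by (rule sum.ub_add_nat) simp
    also have "\<dots> = (\<Sum>j=1..N. f j * of_int \<lceil>(real k + 1 - real j) / real N\<rceil>) + (\<Sum>j=1..N. f j)"
      using less[of k] m N sum_periodic_window[OF per] by simp
    also have "\<dots> = (\<Sum>j=1..N. f j * of_int \<lceil>(real m + 1 - real j) / real N\<rceil>)"
      unfolding shift by (simp add: sum.distrib distrib_left)
    finally show ?thesis .
  qed
qed

lemma ceiling_period_weight_bounds:
  fixes m j N :: nat
  assumes "1 \<le> j" "j \<le> N"
  shows "0 \<le> \<lceil>(real m + 1 - real j) / real N\<rceil>" "\<lceil>(real m + 1 - real j) / real N\<rceil> \<le> int m"
proof -
  have "m \<le> m * N"
    using assms by simp
  then have "real m \<le> real m * real N"
    by (metis of_nat_le_iff of_nat_mult)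
  then show "\<lceil>(real m + 1 - real j) / real N\<rceil> \<le> int m"
    using assms by (simp add: ceiling_le_iff divide_le_eq)
  show "0 \<le> \<lceil>(real m + 1 - real j) / real N\<rceil>"
    using assms by (simp add: zero_le_ceiling field_simps)
qed

lemma ceiling_weighted_sum_norm_le:
  fixes f :: "nat \<Rightarrow> 'a::real_normed_algebra_1"
  shows "norm (\<Sum>j=1..N. f j * of_int \<lceil>(real m + 1 - real j) / real N\<rceil>)
           \<le> (\<Sum>j=1..N. norm (f j)) * real m"
proof -
  have "norm (f j * of_int \<lceil>(real m + 1 - real j) / real N\<rceil>) \<le> norm (f j) * real m"
    if "j \<in> {1..N}" for j
  proof -
    have "norm (of_int \<lceil>(real m + 1 - real j) / real N\<rceil> :: 'a) \<le> real m"
      using ceiling_period_weight_bounds[of j N m] that by (simp add: norm_of_int)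
    then show ?thesis
      by (rule order_trans[OF norm_mult_ineq mult_left_mono]) simp
  qed
  then have "norm (\<Sum>j=1..N. f j * of_int \<lceil>(real m + 1 - real j) / real N\<rceil>)
      \<le> (\<Sum>j=1..N. norm (f j) * real m)"
    by (intro sum_norm_le)
  then show ?thesis
    by (simp add: sum_distrib_right)
qed

lemma qpoch_Suc: "qpoch a q (Suc n) = qpoch a q n * (1 - a * q ^ n)"
  by (simp add: qpoch_def)

lemma one_minus_mult_power_nonzero:
  fixes a q :: complex
  assumes "norm a < 1" "norm q \<le> 1"
  shows "1 - a * q ^ j \<noteq> 0"
proof
  assume "1 - a * q ^ j = 0"
  then have "norm (a * q ^ j) = 1"
    by simp
  moreover have "norm (a * q ^ j) < 1"
  proof -
    have "norm (a * q ^ j) = norm a * norm q ^ j"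
      by (simp add: norm_mult norm_power)
    also have "\<dots> \<le> norm a"
      using assms by (intro mult_left_le power_le_one) auto
    finally show ?thesis
      using assms(1) by linarith
  qed
  ultimately show False
    by simp
qed

lemma qpoch_nonzero:
  assumes "norm a < 1" "norm q \<le> 1"
  shows "qpoch a q n \<noteq> 0"
  using one_minus_mult_power_nonzero[OF assms] by (simp add: qpoch_def)

lemma convergent_prod_qpoch:
  fixes a q :: complex
  assumes "norm q < 1"
  shows "convergent_prod (\<lambda>j. 1 - a * q ^ j)"
proof -
  have "summable (\<lambda>j. norm ((1 - a * q ^ j) - 1))"
    using assms by (simp add: norm_mult norm_power)
  then show ?thesis
    by (intro abs_convergent_prod_imp_convergent_prod) (simp add: abs_convergent_prod_conv_summable)
qed

lemma qpoch_tendsto_qpoch_inf: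
  assumes "norm q < 1"
  shows "(\<lambda>n. qpoch a q n) \<longlonglongrightarrow> qpoch_inf a q"
proof -
  have "(\<lambda>n. \<Prod>j\<le>n. 1 - a * q ^ j) \<longlonglongrightarrow> qpoch_inf a q"
    unfolding qpoch_inf_def by (rule convergent_prod_LIMSEQ[OF convergent_prod_qpoch[OF assms]])
  then have "(\<lambda>n. qpoch a q (Suc n)) \<longlonglongrightarrow> qpoch_inf a q"
    by (simp add: qpoch_def lessThan_Suc_atMost)
  then show ?thesis
    by (rule LIMSEQ_imp_Suc)
qed

lemma qpoch_inf_nonzero:
  assumes "norm a < 1" "norm q < 1"
  shows "qpoch_inf a q \<noteq> 0"
  unfolding qpoch_inf_def using assms
  by (intro prodinf_nonzero convergent_prod_qpoch one_minus_mult_power_nonzero) auto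

lemma summable_Suc_times_power:
  fixes z :: "'a::{real_normed_field,banach}"
  assumes "norm z < 1"
  shows "summable (\<lambda>n. of_nat (Suc n) * z ^ n)"
proof -
  have "summable (\<lambda>n. diffs (\<lambda>_. 1) n * z ^ n)"
    using assms by (intro termdiff_converges[where K = 1]) simp_all
  then show ?thesis
    by (simp add: diffs_def)
qed

lemma summable_qseries_linear_growth:
  fixes q :: complex and G :: "nat \<Rightarrow> complex"
  assumes q: "norm q < 1" and G: "\<And>m. norm (G m) \<le> C * real (Suc m)"
  shows "summable (\<lambda>m. q ^ m / qpoch q q m * G m)"
proof -
  have "(\<lambda>m. inverse (qpoch q q m)) \<longlonglongrightarrow> inverse (qpoch_inf q q)"
    using q by (intro tendsto_inverse qpoch_tendsto_qpoch_inf qpoch_inf_nonzero)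
  then obtain B where "B > 0" and B: "\<And>m. norm (inverse (qpoch q q m)) \<le> B"
    by (metis convergentI convergent_imp_Bseq BseqE)
  have bound: "norm (q ^ m / qpoch q q m * G m) \<le> B * C * (real (Suc m) * norm q ^ m)" for m
  proof -
    have "norm (q ^ m / qpoch q q m * G m) = norm q ^ m * norm (inverse (qpoch q q m)) * norm (G m)"
      by (simp add: norm_mult norm_power divide_inverse)
    also have "\<dots> \<le> norm q ^ m * B * (C * real (Suc m))"
      using \<open>B > 0\<close> B G by (intro mult_mono mult_left_mono) auto
    finally show ?thesis
      by (simp add: ac_simps)
  qed
  have "summable (\<lambda>m. B * C * (real (Suc m) * norm q ^ m))"
    using q by (intro summable_mult summable_Suc_times_power) simp
  then show ?thesis
    using bound by (rule summable_comparison_test')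
qed

lemma sum_minus_aseq_Suc:
  "(\<Sum>l=1..Suc n. f l) - aseq f (Suc n) q
     = q ^ n * (\<Sum>l=1..n. f l) + (1 - q ^ n) * ((\<Sum>l=1..n. f l) - aseq f n q)"
  by (simp add: algebra_simps)

lemma sum_minus_aseq_eq_qpoch_series:
  assumes q: "norm q < 1"
  shows "(\<Sum>l=1..Suc n. f l) - aseq f (Suc n) q
           = qpoch q q n * (\<Sum>m\<le>n. q ^ m / qpoch q q m * (\<Sum>l=1..m. f l))"
proof (induction n)
  case 0
  show ?case by (simp add: qpoch_def)
next
  case (Suc n)
  let ?S = "\<lambda>n. \<Sum>m\<le>n. q ^ m / qpoch q q m * (\<Sum>l=1..m. f l)"
  have nz: "qpoch q q (Suc n) \<noteq> 0"
    using q by (intro qpoch_nonzero) auto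
  have "(\<Sum>l=1..Suc (Suc n). f l) - aseq f (Suc (Suc n)) q
      = q ^ Suc n * (\<Sum>l=1..Suc n. f l) + (1 - q ^ Suc n) * (qpoch q q n * ?S n)"
    by (simp only: sum_minus_aseq_Suc[of f "Suc n"] Suc.IH)
  also have "\<dots> = qpoch q q (Suc n) * (?S n + q ^ Suc n / qpoch q q (Suc n) * (\<Sum>l=1..Suc n. f l))"
    using nz by (simp add: qpoch_Suc field_simps)
  also have "\<dots> = qpoch q q (Suc n) * ?S (Suc n)"
    by simp
  finally show ?case .
qed

lemma sum_minus_aseq_tendsto:
  assumes q: "norm q < 1"
    and summable: "summable (\<lambda>m. q ^ m / qpoch q q m * (\<Sum>l=1..m. f l))"
  shows "(\<lambda>n. (\<Sum>l=1..n. f l) - aseq f n q) \<longlonglongrightarrow>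
           qpoch_inf q q * (\<Sum>m. q ^ m / qpoch q q m * (\<Sum>l=1..m. f l))"
proof -
  have "(\<lambda>n. \<Sum>m\<le>n. q ^ m / qpoch q q m * (\<Sum>l=1..m. f l))
          \<longlonglongrightarrow> (\<Sum>m. q ^ m / qpoch q q m * (\<Sum>l=1..m. f l))"
    using summable by (rule summable_LIMSEQ')
  then have "(\<lambda>n. (\<Sum>l=1..Suc n. f l) - aseq f (Suc n) q) \<longlonglongrightarrow>
           qpoch_inf q q * (\<Sum>m. q ^ m / qpoch q q m * (\<Sum>l=1..m. f l))"
    unfolding sum_minus_aseq_eq_qpoch_series[OF q]
    using q by (intro tendsto_mult qpoch_tendsto_qpoch_inf)
  then show ?thesis
    by (rule LIMSEQ_imp_Suc)
qed

theorem corollary1p4: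
  fixes f :: "nat \<Rightarrow> complex" and N :: nat and q :: complex
  assumes "N \<ge> 1"
    and "\<forall>n\<ge>1. f (n + N) = f n"
    and "norm q < 1"
  shows "(\<lambda>n. (\<Sum>l=1..n. f l) - aseq f n q) \<longlonglongrightarrow>
           qpoch_inf q q *
           (\<Sum>n. q ^ n / qpoch q q n *
              (\<Sum>j=1..N. f j * of_int \<lceil>(real n + 1 - real j) / real N\<rceil>))"
proof -
  have partial_sums: "(\<Sum>l=1..m. f l) = (\<Sum>j=1..N. f j * of_int \<lceil>(real m + 1 - real j) / real N\<rceil>)" for m
    using assms(1,2) by (rule sum_periodic_eq_ceiling_weighted)
  have "norm (\<Sum>l=1..m. f l) \<le> (\<Sum>j=1..N. norm (f j)) * real (Suc m)" for m
    unfolding partial_sums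
    by (rule order_trans[OF ceiling_weighted_sum_norm_le mult_left_mono]) (simp_all add: sum_nonneg)
  then have "summable (\<lambda>m. q ^ m / qpoch q q m * (\<Sum>l=1..m. f l))"
    using assms(3) by (intro summable_qseries_linear_growth)
  then show ?thesis
    unfolding partial_sums[symmetric] by (rule sum_minus_aseq_tendsto[OF assms(3)])
qed

end
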